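(* Let $\Omega\subset\mathbb{C}$ be a simply connected domain and let $(h,\mathcal{M},\mathcal{N})$ be a Weierstrass data of the second kind on $\Omega$. Then there exists a map $\mathbf{X}=(\mathbf{x}_1,\mathbf{x}_2,\mathbf{x}_3,\mathbf{x}_4):\Omega\to\mathbb{L}^4$ (unique up to an additive constant vector) with $$\mathbf{X}_z=\mathcal{M}_z\begin{bmatrix}1\\ -i\\ -h\\ h\end{bmatrix}+\mathcal{N}_z\begin{bmatrix}0\\ ih\\ \frac12(1+h^2)\\ \frac12(1-h^2)\end{bmatrix},$$ which is a conformal spacelike immersion parameterizing a marginally trapped surface in $\mathbb{L}^4$, with induced metric $$ds^2=4\left|\mathcal{M}_z-(\mathrm{Re}\,h)\,\mathcal{N}_z\right|^2|dz|^2 .$$ Moreover, up to additive constants, $\mathbf{x}_1=\mathcal{M}$ and $\mathbf{x}_3+\mathbf{x}_4=\mathcal{N}$.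
   Context: $\Omega\subset\mathbb{R}^2\equiv\mathbb{C}$ has complex coordinate $z=u+iv$, and $\partial_z=\frac12(\partial_u-i\partial_v)$, $\partial_{\overline z}=\frac12(\partial_u+i\partial_v)$; subscripts denote partial derivatives. $\mathbb{L}^4$ is $\mathbb{R}^4$ with the Lorentzian metric $\langle x,y\rangle=x_1y_1+x_2y_2+x_3y_3-x_4y_4$; this form is extended complex-bilinearly to $\mathbb{C}^4$. A map $\mathbf{X}:\Omega\to\mathbb{L}^4$ is a conformal spacelike immersion with metric $\Lambda|dz|^2=\Lambda(du^2+dv^2)$, $\Lambda>0$, iff $\langle\mathbf{X}_z,\mathbf{X}_z\rangle=0$ and $\Lambda=2\langle\mathbf{X}_z,\overline{\mathbf{X}_z}\rangle>0$. Its mean curvature vector is $\mathbf{H}=\Delta_{ds^2}\mathbf{X}=\frac{4}{\Lambda}\mathbf{X}_{z\overline z}$. A spacelike surface is marginally trapped if $\langle\mathbf{H},\mathbf{H}\rangle=0$. A Weierstrass data of the second kind on $\Omega$ is a triple $(h,\mathcal{M},\mathcal{N})$ where $h:\Omega\to\mathbb{C}\setminus\{0\}$ and $\mathcal{M},\mathcal{N}:\Omega\to\mathbb{R}$ are $\mathcal{C}^2$, satisfying $h_{\overline z}=0$, $\mathcal{M}_{z\overline z}=(\mathrm{Re}\,h)\,\mathcal{N}_{z\overline z}$, and $\mathcal{M}_z-(\mathrm{Re}\,h)\,\mathcal{N}_z\neq0$ at every point of $\Omega$. *)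

theory Defs
  imports "HOL-Analysis.Analysis"
begin

definition pdu :: "(complex \<Rightarrow> 'b::real_normed_vector) \<Rightarrow> complex \<Rightarrow> 'b" where
  "pdu f z = frechet_derivative f (at z) 1"

definition pdv :: "(complex \<Rightarrow> 'b::real_normed_vector) \<Rightarrow> complex \<Rightarrow> 'b" where
  "pdv f z = frechet_derivative f (at z) \<i>"

definition dz :: "(complex \<Rightarrow> complex) \<Rightarrow> complex \<Rightarrow> complex" where
  "dz f z = (pdu f z - \<i> * pdv f z) / 2"

definition dzbar :: "(complex \<Rightarrow> complex) \<Rightarrow> complex \<Rightarrow> complex" where
  "dzbar f z = (pdu f z + \<i> * pdv f z) / 2"

definition rdz :: "(complex \<Rightarrow> real) \<Rightarrow> complex \<Rightarrow> complex" where
  "rdz f = dz (\<lambda>w. complex_of_real (f w))"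

definition C2_on :: "complex set \<Rightarrow> (complex \<Rightarrow> real) \<Rightarrow> bool" where
  "C2_on S f \<longleftrightarrow>
     (\<forall>z\<in>S. f differentiable (at z)) \<and>
     (\<forall>z\<in>S. pdu f differentiable (at z) \<and> pdv f differentiable (at z)) \<and>
     continuous_on S (pdu (pdu f)) \<and> continuous_on S (pdv (pdu f)) \<and>
     continuous_on S (pdu (pdv f)) \<and> continuous_on S (pdv (pdv f))"

definition lor :: "complex^4 \<Rightarrow> complex^4 \<Rightarrow> complex" where
  "lor x y = x$1 * y$1 + x$2 * y$2 + x$3 * y$3 - x$4 * y$4"

definition cvec :: "complex^4 \<Rightarrow> complex^4" where
  "cvec x = (\<chi> j. cnj (x$j))"

definition Xz :: "(complex \<Rightarrow> real^4) \<Rightarrow> complex \<Rightarrow> complex^4" where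
  "Xz X z = (\<chi> j. rdz (\<lambda>w. X w $ j) z)"

definition Xzzbar :: "(complex \<Rightarrow> real^4) \<Rightarrow> complex \<Rightarrow> complex^4" where
  "Xzzbar X z = (\<chi> j. dzbar (\<lambda>w. Xz X w $ j) z)"

text \<open>Conformal factor Lambda = 2 <X_z, conj X_z> (which is real).\<close>
definition confLambda :: "(complex \<Rightarrow> real^4) \<Rightarrow> complex \<Rightarrow> real" where
  "confLambda X z = Re (2 * lor (Xz X z) (cvec (Xz X z)))"

definition conformal_spacelike_immersion :: "complex set \<Rightarrow> (complex \<Rightarrow> real^4) \<Rightarrow> bool" where
  "conformal_spacelike_immersion S X \<longleftrightarrow>
     (\<forall>j. C2_on S (\<lambda>w. X w $ j)) \<and>
     (\<forall>z\<in>S. lor (Xz X z) (Xz X z) = 0 \<and>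
             2 * lor (Xz X z) (cvec (Xz X z)) = complex_of_real (confLambda X z) \<and>
             confLambda X z > 0)"

definition meanH :: "(complex \<Rightarrow> real^4) \<Rightarrow> complex \<Rightarrow> complex^4" where
  "meanH X z = (\<chi> j. complex_of_real (4 / confLambda X z) * Xzzbar X z $ j)"

definition marginally_trapped :: "complex set \<Rightarrow> (complex \<Rightarrow> real^4) \<Rightarrow> bool" where
  "marginally_trapped S X \<longleftrightarrow> (\<forall>z\<in>S. lor (meanH X z) (meanH X z) = 0)"

definition weierstrass_data_2 ::
  "complex set \<Rightarrow> (complex \<Rightarrow> complex) \<Rightarrow> (complex \<Rightarrow> real) \<Rightarrow> (complex \<Rightarrow> real) \<Rightarrow> bool" where
  "weierstrass_data_2 \<Omega> h M N \<longleftrightarrow>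
     h holomorphic_on \<Omega> \<and> (\<forall>z\<in>\<Omega>. h z \<noteq> 0) \<and>
     C2_on \<Omega> M \<and> C2_on \<Omega> N \<and>
     (\<forall>z\<in>\<Omega>. dzbar (rdz M) z = complex_of_real (Re (h z)) * dzbar (rdz N) z) \<and>
     (\<forall>z\<in>\<Omega>. rdz M z - complex_of_real (Re (h z)) * rdz N z \<noteq> 0)"

definition XzW :: "(complex \<Rightarrow> complex) \<Rightarrow> (complex \<Rightarrow> real) \<Rightarrow> (complex \<Rightarrow> real) \<Rightarrow> complex \<Rightarrow> complex^4" where
  "XzW h M N z =
     (\<chi> j. rdz M z * (vector [1, -\<i>, - h z, h z] :: complex^4) $ j
          + rdz N z * (vector [0, \<i> * h z, (1 + (h z)\<^sup>2) / 2, (1 - (h z)\<^sup>2) / 2] :: complex^4) $ j)"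

end

theory Submission
  imports Defs "HOL-Complex_Analysis.Complex_Analysis"
begin

text \<open>Write the prescribed \<open>X\<^sub>z\<close> as \<open>wvec M\<^sub>z N\<^sub>z h\<close>; for each \<open>k\<close> the vectors \<open>wvec p q k\<close>
  form a totally null plane of the complexified Lorentz form. By the Weierstrass condition the
  \<open>\<partial>\<^sub>z\<^sub>b\<^sub>a\<^sub>r\<close>-derivative of the \<open>j\<close>-th component of \<open>2 X\<^sub>z\<close> is \<open>2 N\<^sub>z\<^sub>z\<^sub>b\<^sub>a\<^sub>r (wvec (Re h) 1 h)\<^sub>j\<close>,
  which is real: \<open>N\<^sub>z\<^sub>z\<^sub>b\<^sub>a\<^sub>r\<close> by Schwarz's theorem and \<open>wvec (Re h) 1 h\<close> by inspection. Hence each real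
  1-form \<open>Re (2 X\<^sub>z\<^sub>j dz)\<close> is closed and, the domain being simply connected, exact; its primitives
  are the components of \<open>X\<close>. Both \<open>X\<^sub>z\<close> and \<open>X\<^sub>z\<^sub>z\<^sub>b\<^sub>a\<^sub>r\<close> lie in the null plane, so \<open>X\<close> is conformal
  and its mean curvature vector is null, and \<open>2 \<langle>X\<^sub>z, X\<^sub>z\<^sup>*\<rangle> = 4 |M\<^sub>z - Re h N\<^sub>z|\<^sup>2\<close>. Uniqueness and the
  formulas for \<open>x\<^sub>1\<close> and \<open>x\<^sub>3 + x\<^sub>4\<close> hold because a real function is determined up to a constant
  by its \<open>z\<close>-derivative.\<close>

section \<open>The null plane of Weierstrass vectors\<close>

lemma vector_4_nth [simp]:
  "(vector [x, y, z, w] :: ('a::zero)^4) $ 1 = x"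
  "(vector [x, y, z, w] :: ('a::zero)^4) $ 2 = y"
  "(vector [x, y, z, w] :: ('a::zero)^4) $ 3 = z"
  "(vector [x, y, z, w] :: ('a::zero)^4) $ 4 = w"
  unfolding vector_def by simp_all

text \<open>\<open>wvec p q k = p (1, -\<i>, -k, k) + q (0, \<i> k, (1 + k\<^sup>2)/2, (1 - k\<^sup>2)/2)\<close>, the combination in \<open>XzW\<close>.\<close>
definition wvec :: "complex \<Rightarrow> complex \<Rightarrow> complex \<Rightarrow> complex^4" where
  "wvec p q k = vector [p, \<i> * (k * q - p), (1 + k\<^sup>2) / 2 * q - k * p, (1 - k\<^sup>2) / 2 * q + k * p]"

lemma XzW_eq_wvec: "XzW h M N z = wvec (rdz M z) (rdz N z) (h z)"
  unfolding XzW_def wvec_def by (simp add: vec_eq_iff forall_4 algebra_simps)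

lemma wvec_nth_linear: "wvec p q k $ j = p * wvec 1 0 k $ j + q * wvec 0 1 k $ j"
  using exhaust_4[of j] by (auto simp: wvec_def algebra_simps)

lemma wvec_scale: "(\<chi> j. c * wvec p q k $ j) = wvec (c * p) (c * q) k"
  by (simp add: vec_eq_iff forall_4 wvec_def algebra_simps)

lemma Im_wvec_Re: "Im (wvec (of_real (Re k)) 1 k $ j) = 0"
  using exhaust_4[of j] by (auto simp: wvec_def power2_eq_square algebra_simps)

lemma lor_wvec_self: "lor (wvec p q k) (wvec p q k) = 0"
  unfolding lor_def wvec_def by (simp add: field_simps power2_eq_square)

lemma lor_wvec_cvec:
  "2 * lor (wvec p q k) (cvec (wvec p q k)) = of_real (4 * (cmod (p - of_real (Re k) * q))\<^sup>2)"
  unfolding lor_def wvec_def cvec_def cmod_power2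
  by (simp add: complex_eq_iff field_simps power2_eq_square)

lemma holomorphic_on_wvec_nth:
  "h holomorphic_on S \<Longrightarrow> (\<lambda>w. wvec p q (h w) $ j) holomorphic_on S"
  using exhaust_4[of j] by (auto simp: wvec_def intro!: holomorphic_intros)

section \<open>Wirtinger derivatives of real functions\<close>

lemma linear_complex_decomp:
  fixes L :: "complex \<Rightarrow> 'b::real_vector"
  assumes "linear L"
  shows "L h = Re h *\<^sub>R L 1 + Im h *\<^sub>R L \<i>"
proof -
  have "h = Re h *\<^sub>R 1 + Im h *\<^sub>R \<i>" by (simp add: complex_eq_iff)
  then have "L h = L (Re h *\<^sub>R 1 + Im h *\<^sub>R \<i>)" by simp
  also have "\<dots> = Re h *\<^sub>R L 1 + Im h *\<^sub>R L \<i>"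
    using assms by (simp add: linear_add linear_scale)
  finally show ?thesis .
qed

lemma rdz_eq_half:
  assumes "(f has_derivative (\<lambda>h. Re (g * h))) (at w)"
  shows "rdz f w = g / 2"
proof -
  have d: "((\<lambda>w. complex_of_real (f w)) has_derivative (\<lambda>h. complex_of_real (Re (g * h)))) (at w)"
    using has_derivative_of_real[OF assms] by simp
  show ?thesis
    unfolding rdz_def dz_def pdu_def pdv_def frechet_derivative_at[OF d, symmetric]
    by (simp add: complex_eq_iff)
qed

lemma has_derivative_rdz:
  fixes f :: "complex \<Rightarrow> real"
  assumes "(f has_derivative D) (at z)"
  shows "D = (\<lambda>h. Re (2 * rdz f z * h))"
proof -
  define c where "c = Complex (D 1) (- D \<i>)"
  have "linear D" using assms has_derivative_linear by blast
  then have D: "D = (\<lambda>h. Re (c * h))"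
    by (intro ext, subst linear_complex_decomp) (simp_all add: c_def algebra_simps)
  with assms have "rdz f z = c / 2"
    by (intro rdz_eq_half) simp
  then have "c = 2 * rdz f z" by (metis mult.commute nonzero_eq_divide_eq zero_neq_numeral)
  with D show ?thesis by simp
qed

lemma rdz_add:
  assumes "f differentiable (at z)" "g differentiable (at z)"
  shows "rdz (\<lambda>w. f w + g w) z = rdz f z + rdz g z"
proof -
  obtain Df Dg where Df: "(f has_derivative Df) (at z)" and Dg: "(g has_derivative Dg) (at z)"
    using assms unfolding differentiable_def by blast
  have "((\<lambda>w. f w + g w) has_derivative (\<lambda>h. Df h + Dg h)) (at z)"
    using Df Dg by (rule has_derivative_add)
  also have "(\<lambda>h. Df h + Dg h) = (\<lambda>h. Re (2 * (rdz f z + rdz g z) * h))"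
    unfolding has_derivative_rdz[OF Df] has_derivative_rdz[OF Dg] by (simp add: algebra_simps)
  finally have "((\<lambda>w. f w + g w) has_derivative (\<lambda>h. Re (2 * (rdz f z + rdz g z) * h))) (at z)" .
  then have "rdz (\<lambda>w. f w + g w) z = 2 * (rdz f z + rdz g z) / 2"
    by (rule rdz_eq_half)
  then show ?thesis by (metis nonzero_mult_div_cancel_left zero_neq_numeral)
qed

lemma rdz_eq_imp_eq_plus_const:
  assumes "open S" "connected S"
    and f: "\<And>z. z \<in> S \<Longrightarrow> f differentiable (at z)" and g: "\<And>z. z \<in> S \<Longrightarrow> g differentiable (at z)"
    and eq: "\<And>z. z \<in> S \<Longrightarrow> rdz f z = rdz g z"
  shows "\<exists>c. \<forall>z\<in>S. f z = g z + c"
proof -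
  have d0: "((\<lambda>w. f w - g w) has_derivative (\<lambda>h. 0)) (at z)" if z: "z \<in> S" for z
  proof -
    obtain Df Dg where Df: "(f has_derivative Df) (at z)" and Dg: "(g has_derivative Dg) (at z)"
      using f[OF z] g[OF z] unfolding differentiable_def by blast
    have "Df = Dg" using has_derivative_rdz[OF Df] has_derivative_rdz[OF Dg] eq[OF z] by simp
    then show ?thesis using has_derivative_diff[OF Df Dg] by simp
  qed
  have "continuous_on S (\<lambda>w. f w - g w)"
    using d0 has_derivative_continuous continuous_at_imp_continuous_on by blast
  then have "(\<lambda>w. f w - g w) constant_on S"
    using d0 by (intro has_derivative_zero_connected_constant_on[OF assms(2,1) finite.emptyI])
      (auto intro: has_derivative_at_withinI)
  then show ?thesis unfolding constant_on_def by (metis diff_add_cancel add.commute)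
qed

lemma dzbar_eq_on_open:
  assumes "open S" "z \<in> S" "(g has_derivative (\<lambda>h. A * h + B * cnj h)) (at z)"
    and "\<And>w. w \<in> S \<Longrightarrow> G w = c * g w"
  shows "dzbar G z = c * B"
proof -
  have "((\<lambda>w. c * g w) has_derivative (\<lambda>h. c * A * h + c * B * cnj h)) (at z)"
    using has_derivative_mult_right[OF assms(3), of c] by (simp add: algebra_simps)
  then have G: "(G has_derivative (\<lambda>h. c * A * h + c * B * cnj h)) (at z)"
    by (rule has_derivative_transform_within_open[OF _ assms(1,2)]) (simp add: assms(4))
  show ?thesis
    unfolding dzbar_def pdu_def pdv_def frechet_derivative_at[OF G, symmetric]
    by (simp add: complex_eq_iff algebra_simps)
qed

text \<open>\<open>real_primitive_on S f g\<close> says \<open>g = 2 f\<^sub>z\<close>, and \<open>wirtinger_C1_on S g A B\<close> says \<open>g\<^sub>z = A\<close>,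
  \<open>g\<^sub>z\<^sub>b\<^sub>a\<^sub>r = B\<close> with \<open>A\<close>, \<open>B\<close> continuous; together they describe a real \<open>C\<^sup>2\<close> function.\<close>
definition real_primitive_on :: "complex set \<Rightarrow> (complex \<Rightarrow> real) \<Rightarrow> (complex \<Rightarrow> complex) \<Rightarrow> bool" where
  "real_primitive_on S f g \<longleftrightarrow> (\<forall>w\<in>S. (f has_derivative (\<lambda>h. Re (g w * h))) (at w))"

definition wirtinger_C1_on ::
  "complex set \<Rightarrow> (complex \<Rightarrow> complex) \<Rightarrow> (complex \<Rightarrow> complex) \<Rightarrow> (complex \<Rightarrow> complex) \<Rightarrow> bool" where
  "wirtinger_C1_on S g A B \<longleftrightarrow>
     (\<forall>w\<in>S. (g has_derivative (\<lambda>h. A w * h + B w * cnj h)) (at w)) \<and> continuous_on S A \<and> continuous_on S B"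

lemma wirtinger_C1_on_imp_continuous_on:
  "wirtinger_C1_on S g A B \<Longrightarrow> continuous_on S g"
  unfolding wirtinger_C1_on_def
  using has_derivative_continuous continuous_at_imp_continuous_on by blast

lemma wirtinger_C1_on_holomorphic_comb:
  assumes "open S" "k1 holomorphic_on S" "k2 holomorphic_on S"
    and g1: "wirtinger_C1_on S g1 A1 B1" and g2: "wirtinger_C1_on S g2 A2 B2"
  shows "wirtinger_C1_on S (\<lambda>w. k1 w * g1 w + k2 w * g2 w)
           (\<lambda>w. deriv k1 w * g1 w + k1 w * A1 w + deriv k2 w * g2 w + k2 w * A2 w)
           (\<lambda>w. k1 w * B1 w + k2 w * B2 w)"
  unfolding wirtinger_C1_on_def
proof (intro conjI ballI)
  fix w assume w: "w \<in> S"
  have "(k1 has_derivative (*) (deriv k1 w)) (at w)" "(k2 has_derivative (*) (deriv k2 w)) (at w)"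
    using holomorphic_derivI[OF assms(2,1) w] holomorphic_derivI[OF assms(3,1) w]
    by (simp_all add: has_field_derivative_def)
  moreover have "(g1 has_derivative (\<lambda>h. A1 w * h + B1 w * cnj h)) (at w)"
    "(g2 has_derivative (\<lambda>h. A2 w * h + B2 w * cnj h)) (at w)"
    using g1 g2 w unfolding wirtinger_C1_on_def by blast+
  ultimately show "((\<lambda>w. k1 w * g1 w + k2 w * g2 w) has_derivative
      (\<lambda>h. (deriv k1 w * g1 w + k1 w * A1 w + deriv k2 w * g2 w + k2 w * A2 w) * h
           + (k1 w * B1 w + k2 w * B2 w) * cnj h)) (at w)"
    by (auto intro!: derivative_eq_intros elim!: has_derivative_eq_rhs simp: algebra_simps)
next
  have "continuous_on S k1" "continuous_on S k2" "continuous_on S (deriv k1)" "continuous_on S (deriv k2)"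
    using assms(1-3) by (auto intro!: holomorphic_on_imp_continuous_on holomorphic_deriv)
  then show "continuous_on S (\<lambda>w. deriv k1 w * g1 w + k1 w * A1 w + deriv k2 w * g2 w + k2 w * A2 w)"
    "continuous_on S (\<lambda>w. k1 w * B1 w + k2 w * B2 w)"
    using g1 g2 wirtinger_C1_on_imp_continuous_on[OF g1] wirtinger_C1_on_imp_continuous_on[OF g2]
    unfolding wirtinger_C1_on_def by (auto intro!: continuous_intros)
qed

lemma C2_on_if_real_primitive_on:
  assumes "open S" "real_primitive_on S f g" "wirtinger_C1_on S g A B"
  shows "C2_on S f"
proof -
  have fd: "\<And>w. w \<in> S \<Longrightarrow> (f has_derivative (\<lambda>h. Re (g w * h))) (at w)"
   and gd: "\<And>w. w \<in> S \<Longrightarrow> (g has_derivative (\<lambda>h. A w * h + B w * cnj h)) (at w)"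
   and cA: "continuous_on S A" and cB: "continuous_on S B"
    using assms(2,3) unfolding real_primitive_on_def wirtinger_C1_on_def by auto
  have pu: "pdu f w = Re (g w)" and pv: "pdv f w = - Im (g w)" if "w \<in> S" for w
    unfolding pdu_def pdv_def frechet_derivative_at[OF fd[OF that], symmetric] by simp_all
  have du: "(pdu f has_derivative (\<lambda>h. Re (A w * h + B w * cnj h))) (at w)" if "w \<in> S" for w
    by (rule has_derivative_transform_within_open[OF has_derivative_Re[OF gd[OF that]] assms(1) that])
       (simp add: pu)
  have dv: "(pdv f has_derivative (\<lambda>h. - Im (A w * h + B w * cnj h))) (at w)" if "w \<in> S" for w
    by (rule has_derivative_transform_within_open
        [OF has_derivative_minus[OF has_derivative_Im[OF gd[OF that]]] assms(1) that])
       (simp add: pv)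
  have uu: "pdu (pdu f) w = Re (A w + B w)" and vu: "pdv (pdu f) w = Re (A w * \<i> - B w * \<i>)"
    if "w \<in> S" for w
    unfolding pdu_def[of "pdu f"] pdv_def[of "pdu f"] frechet_derivative_at[OF du[OF that], symmetric]
    by simp_all
  have uv: "pdu (pdv f) w = - Im (A w + B w)" and vv: "pdv (pdv f) w = - Im (A w * \<i> - B w * \<i>)"
    if "w \<in> S" for w
    unfolding pdu_def[of "pdv f"] pdv_def[of "pdv f"] frechet_derivative_at[OF dv[OF that], symmetric]
    by simp_all
  show ?thesis
    unfolding C2_on_def
  proof (intro conjI ballI)
    show "f differentiable at z" "pdu f differentiable at z" "pdv f differentiable at z" if "z \<in> S" for z
      using fd[OF that] du[OF that] dv[OF that] by (auto simp: differentiable_def)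
    show "continuous_on S (pdu (pdu f))"
      using continuous_on_eq[of S "\<lambda>w. Re (A w + B w)"] uu by (auto intro!: continuous_intros cA cB)
    show "continuous_on S (pdv (pdu f))"
      using continuous_on_eq[of S "\<lambda>w. Re (A w * \<i> - B w * \<i>)"] vu by (auto intro!: continuous_intros cA cB)
    show "continuous_on S (pdu (pdv f))"
      using continuous_on_eq[of S "\<lambda>w. - Im (A w + B w)"] uv by (auto intro!: continuous_intros cA cB)
    show "continuous_on S (pdv (pdv f))"
      using continuous_on_eq[of S "\<lambda>w. - Im (A w * \<i> - B w * \<i>)"] vv by (auto intro!: continuous_intros cA cB)
  qed
qed

lemma C2_on_imp_real_primitive_on:
  assumes "open S" "C2_on S f"
  obtains g A B where "real_primitive_on S f g" "wirtinger_C1_on S g A B" "\<And>w. w \<in> S \<Longrightarrow> g w = 2 * rdz f w"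
proof -
  have fdiff: "\<And>w. w \<in> S \<Longrightarrow> f differentiable at w"
    and udiff: "\<And>w. w \<in> S \<Longrightarrow> pdu f differentiable at w"
    and vdiff: "\<And>w. w \<in> S \<Longrightarrow> pdv f differentiable at w"
    and c1: "continuous_on S (pdu (pdu f))" and c2: "continuous_on S (pdv (pdu f))"
    and c3: "continuous_on S (pdu (pdv f))" and c4: "continuous_on S (pdv (pdv f))"
    using assms(2) unfolding C2_on_def by auto
  define g where "g w = complex_of_real (pdu f w) - \<i> * complex_of_real (pdv f w)" for w
  define P where "P w = complex_of_real (pdu (pdu f) w) - \<i> * complex_of_real (pdu (pdv f) w)" for w
  define Q where "Q w = complex_of_real (pdv (pdu f) w) - \<i> * complex_of_real (pdv (pdv f) w)" for w
  define A where "A w = (P w - \<i> * Q w) / 2" for w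
  define B where "B w = (P w + \<i> * Q w) / 2" for w
  have fd: "(f has_derivative (\<lambda>h. Re (g w * h))) (at w)" if "w \<in> S" for w
  proof -
    have d: "(f has_derivative frechet_derivative f (at w)) (at w)"
      using fdiff[OF that] frechet_derivative_works by blast
    then have "linear (frechet_derivative f (at w))"
      using has_derivative_linear by blast
    then have "frechet_derivative f (at w) = (\<lambda>h. Re (g w * h))"
      by (intro ext, subst linear_complex_decomp) (simp_all add: g_def pdu_def pdv_def algebra_simps)
    then show ?thesis using d by simp
  qed
  have gd: "(g has_derivative (\<lambda>h. A w * h + B w * cnj h)) (at w)" if "w \<in> S" for w
  proof -
    have d1: "(pdu f has_derivative frechet_derivative (pdu f) (at w)) (at w)"
      and d2: "(pdv f has_derivative frechet_derivative (pdv f) (at w)) (at w)"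
      using udiff[OF that] vdiff[OF that] frechet_derivative_works by blast+
    have l1: "linear (frechet_derivative (pdu f) (at w))" and l2: "linear (frechet_derivative (pdv f) (at w))"
      using d1 d2 has_derivative_linear by blast+
    have d: "(g has_derivative (\<lambda>h. complex_of_real (frechet_derivative (pdu f) (at w) h)
                 - \<i> * complex_of_real (frechet_derivative (pdv f) (at w) h))) (at w)"
      unfolding g_def[abs_def] by (intro derivative_eq_intros has_derivative_of_real d1 d2) (auto intro: d1 d2)
    have "(\<lambda>h. complex_of_real (frechet_derivative (pdu f) (at w) h)
                 - \<i> * complex_of_real (frechet_derivative (pdv f) (at w) h)) = (\<lambda>h. A w * h + B w * cnj h)"
      by (intro ext, subst linear_complex_decomp[OF l1], subst linear_complex_decomp[OF l2])
         (simp add: A_def B_def P_def Q_def pdu_def pdv_def complex_eq_iff field_simps)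
    then show ?thesis using d by simp
  qed
  have "continuous_on S P" "continuous_on S Q"
    unfolding P_def[abs_def] Q_def[abs_def] by (intro continuous_intros c1 c2 c3 c4)+
  then have "continuous_on S A" "continuous_on S B"
    unfolding A_def[abs_def] B_def[abs_def] by (auto intro!: continuous_intros)
  moreover have "g w = 2 * rdz f w" if "w \<in> S" for w
    unfolding rdz_eq_half[OF fd[OF that]] by simp
  ultimately show ?thesis
    using fd gd by (intro that[of g A B]) (simp_all add: real_primitive_on_def wirtinger_C1_on_def)
qed

section \<open>Schwarz's theorem\<close>

lemma has_real_derivative_along_line:
  fixes F :: "complex \<Rightarrow> real"
  assumes "(F has_derivative D) (at x)" "x = a + of_real s * v"
  shows "((\<lambda>s. F (a + of_real s * v)) has_real_derivative D v) (at s)"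
proof -
  have "((\<lambda>s. a + of_real s * v) has_derivative (\<lambda>s. of_real s * v)) (at s)"
    by (intro derivative_eq_intros) auto
  from has_derivative_compose[OF this assms(1)[unfolded assms(2)]]
  have "((\<lambda>s. F (a + of_real s * v)) has_derivative (\<lambda>x. D (x *\<^sub>R v))) (at s)"
    by (simp add: scaleR_conv_of_real)
  moreover have "(\<lambda>x. D (x *\<^sub>R v)) = (*) (D v)"
    using assms has_derivative_linear linear_scale by (fastforce simp: mult.commute)
  ultimately show ?thesis
    by (simp add: has_field_derivative_def)
qed

lemma second_difference_mvt:
  fixes \<phi> \<phi>s \<phi>sr :: "real \<Rightarrow> real \<Rightarrow> real"
  assumes "0 < t"
    and \<phi>s: "\<And>s r. 0 \<le> s \<Longrightarrow> s \<le> t \<Longrightarrow> 0 \<le> r \<Longrightarrow> r \<le> t \<Longrightarrow>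
               ((\<lambda>s. \<phi> s r) has_real_derivative \<phi>s s r) (at s)"
    and \<phi>sr: "\<And>s r. 0 \<le> s \<Longrightarrow> s \<le> t \<Longrightarrow> 0 \<le> r \<Longrightarrow> r \<le> t \<Longrightarrow>
               ((\<lambda>r. \<phi>s s r) has_real_derivative \<phi>sr s r) (at r)"
  obtains s r where "0 < s" "s < t" "0 < r" "r < t" "\<phi> t t - \<phi> t 0 - \<phi> 0 t + \<phi> 0 0 = t * t * \<phi>sr s r"
proof -
  have "\<exists>s. 0 < s \<and> s < t \<and> (\<phi> t t - \<phi> t 0) - (\<phi> 0 t - \<phi> 0 0) = (t - 0) * (\<phi>s s t - \<phi>s s 0)"
    by (rule MVT2[OF assms(1)]) (intro DERIV_diff \<phi>s; use assms(1) in simp)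
  then obtain s where s: "0 < s" "s < t" "(\<phi> t t - \<phi> t 0) - (\<phi> 0 t - \<phi> 0 0) = (t - 0) * (\<phi>s s t - \<phi>s s 0)"
    by blast
  have "\<exists>r. 0 < r \<and> r < t \<and> \<phi>s s t - \<phi>s s 0 = (t - 0) * \<phi>sr s r"
    by (rule MVT2[OF assms(1)]) (use s(1,2) in \<open>simp add: \<phi>sr\<close>)
  then obtain r where r: "0 < r" "r < t" "\<phi>s s t - \<phi>s s 0 = (t - 0) * \<phi>sr s r"
    by blast
  show ?thesis
    using that[OF s(1,2) r(1,2)] s(3) r(3) by (simp add: algebra_simps)
qed

lemma eq_if_eq_at_nearby_points:
  fixes \<Phi> \<Psi> :: "'a::metric_space \<Rightarrow> real"
  assumes "isCont \<Phi> p" "isCont \<Psi> p"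
    and near: "\<And>d. d > 0 \<Longrightarrow> \<exists>q1 q2. dist q1 p < d \<and> dist q2 p < d \<and> \<Phi> q1 = \<Psi> q2"
  shows "\<Phi> p = \<Psi> p"
proof (rule ccontr)
  assume "\<Phi> p \<noteq> \<Psi> p"
  then have e: "\<bar>\<Phi> p - \<Psi> p\<bar> / 2 > 0" by simp
  obtain d1 d2 where "d1 > 0" and d1: "\<And>q. dist q p < d1 \<Longrightarrow> dist (\<Phi> q) (\<Phi> p) < \<bar>\<Phi> p - \<Psi> p\<bar> / 2"
    and "d2 > 0" and d2: "\<And>q. dist q p < d2 \<Longrightarrow> dist (\<Psi> q) (\<Psi> p) < \<bar>\<Phi> p - \<Psi> p\<bar> / 2"
    using assms(1,2) e unfolding continuous_at_eps_delta by metis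
  obtain q1 q2 where "dist q1 p < min d1 d2" "dist q2 p < min d1 d2" "\<Phi> q1 = \<Psi> q2"
    using near[of "min d1 d2"] \<open>d1 > 0\<close> \<open>d2 > 0\<close> by auto
  then have "dist (\<Phi> q1) (\<Phi> p) < \<bar>\<Phi> p - \<Psi> p\<bar> / 2" "dist (\<Psi> q2) (\<Psi> p) < \<bar>\<Phi> p - \<Psi> p\<bar> / 2"
    using d1[of q1] d2[of q2] by auto
  with \<open>\<Phi> q1 = \<Psi> q2\<close> show False
    unfolding dist_real_def by (auto simp: abs_if split: if_splits)
qed

text \<open>\<open>Im B - Im A\<close> is \<open>\<partial>\<^sub>v\<partial>\<^sub>u f\<close> and \<open>- Im A - Im B\<close> is \<open>\<partial>\<^sub>u\<partial>\<^sub>v f\<close>; both equal the second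
  difference of \<open>f\<close> over a small square, divided by its area, at some points of the square.\<close>
lemma mixed_partials_agree_nearby:
  assumes "open S" "real_primitive_on S f g" "wirtinger_C1_on S g A B" "p \<in> S" "d > 0"
  shows "\<exists>q1 q2. dist q1 p < d \<and> dist q2 p < d \<and> Im (B q1) - Im (A q1) = - Im (A q2) - Im (B q2)"
proof -
  have fd: "\<And>w. w \<in> S \<Longrightarrow> (f has_derivative (\<lambda>h. Re (g w * h))) (at w)"
   and gd: "\<And>w. w \<in> S \<Longrightarrow> (g has_derivative (\<lambda>h. A w * h + B w * cnj h)) (at w)"
    using assms(2,3) unfolding real_primitive_on_def wirtinger_C1_on_def by auto
  define pt where "pt s r = p + of_real s + \<i> * of_real r" for s r :: real
  obtain d0 where d0: "d0 > 0" "ball p d0 \<subseteq> S" using assms(1,4) openE by blast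
  define t where "t = min d d0 / 3"
  have t: "t > 0" using d0 assms(5) by (simp add: t_def)
  have near: "dist (pt s r) p < min d d0" if "0 \<le> s" "s \<le> t" "0 \<le> r" "r \<le> t" for s r
  proof -
    have "dist (pt s r) p = cmod (of_real s + \<i> * of_real r)" by (simp add: pt_def dist_norm)
    also have "\<dots> \<le> cmod (of_real s) + cmod (\<i> * of_real r)" by (rule norm_triangle_ineq)
    also have "\<dots> \<le> 2 * t" using that by (simp add: norm_mult)
    finally have "dist (pt s r) p \<le> 2 * t" .
    then show ?thesis using t unfolding t_def by linarith
  qed
  then have inS: "pt s r \<in> S" if "0 \<le> s" "s \<le> t" "0 \<le> r" "r \<le> t" for s r
    using that d0 by (force simp: dist_commute)
  obtain s1 r1 where sr1: "0 < s1" "s1 < t" "0 < r1" "r1 < t"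
    "f (pt t t) - f (pt t 0) - f (pt 0 t) + f (pt 0 0)
       = t * t * (Im (B (pt s1 r1)) - Im (A (pt s1 r1)))"
  proof (rule second_difference_mvt[OF t, of "\<lambda>s r. f (pt s r)" "\<lambda>s r. Re (g (pt s r))"])
    show "((\<lambda>s. f (pt s r)) has_real_derivative Re (g (pt s r))) (at s)"
      if "0 \<le> s" "s \<le> t" "0 \<le> r" "r \<le> t" for s r
      using has_real_derivative_along_line[OF fd[OF inS[OF that]], of "p + \<i> * of_real r" s 1]
      by (simp add: pt_def algebra_simps)
    show "((\<lambda>r. Re (g (pt s r))) has_real_derivative Im (B (pt s r)) - Im (A (pt s r))) (at r)"
      if "0 \<le> s" "s \<le> t" "0 \<le> r" "r \<le> t" for s r
      using has_real_derivative_along_line[OF has_derivative_Re[OF gd[OF inS[OF that]]], of "p + of_real s" r \<i>]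
      by (simp add: pt_def algebra_simps)
  qed
  obtain r2 s2 where rs2: "0 < r2" "r2 < t" "0 < s2" "s2 < t"
    "f (pt t t) - f (pt 0 t) - f (pt t 0) + f (pt 0 0)
       = t * t * (- Im (A (pt s2 r2)) - Im (B (pt s2 r2)))"
  proof (rule second_difference_mvt[OF t, of "\<lambda>r s. f (pt s r)" "\<lambda>r s. Re (g (pt s r) * \<i>)"])
    show "((\<lambda>r. f (pt s r)) has_real_derivative Re (g (pt s r) * \<i>)) (at r)"
      if "0 \<le> r" "r \<le> t" "0 \<le> s" "s \<le> t" for s r
      using has_real_derivative_along_line[OF fd[OF inS[OF that(3,4,1,2)]], of "p + of_real s" r \<i>]
      by (simp add: pt_def algebra_simps)
    show "((\<lambda>s. Re (g (pt s r) * \<i>)) has_real_derivative - Im (A (pt s r)) - Im (B (pt s r))) (at s)"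
      if "0 \<le> r" "r \<le> t" "0 \<le> s" "s \<le> t" for s r
      using has_real_derivative_along_line
          [OF has_derivative_Re[OF has_derivative_mult_left[OF gd[OF inS[OF that(3,4,1,2)]], of \<i>]],
           of "p + \<i> * of_real r" s 1]
      by (simp add: pt_def algebra_simps)
  qed
  from sr1(5) rs2(5)
  have "t * t * (Im (B (pt s1 r1)) - Im (A (pt s1 r1))) = t * t * (- Im (A (pt s2 r2)) - Im (B (pt s2 r2)))"
    by linarith
  with t have "Im (B (pt s1 r1)) - Im (A (pt s1 r1)) = - Im (A (pt s2 r2)) - Im (B (pt s2 r2))"
    by simp
  moreover have "dist (pt s1 r1) p < d" "dist (pt s2 r2) p < d"
    using near sr1 rs2 by fastforce+
  ultimately show ?thesis by blast
qed

lemma real_primitive_on_dzbar_real: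
  assumes "open S" "real_primitive_on S f g" "wirtinger_C1_on S g A B" "p \<in> S"
  shows "Im (B p) = 0"
proof -
  have "isCont A p" "isCont B p"
    using assms(1,3,4) continuous_on_eq_continuous_at unfolding wirtinger_C1_on_def by blast+
  then have "Im (B p) - Im (A p) = - Im (A p) - Im (B p)"
    using mixed_partials_agree_nearby[OF assms]
    by (intro eq_if_eq_at_nearby_points[where \<Phi> = "\<lambda>q. Im (B q) - Im (A q)"]) (auto intro!: continuous_intros)
  then show ?thesis by simp
qed

section \<open>Poincare's lemma for the form \<open>Re (g dz)\<close>\<close>

definition re_blinfun :: "complex \<Rightarrow> complex \<Rightarrow> complex \<Rightarrow>\<^sub>L real" where
  "re_blinfun c1 c2 = Blinfun (\<lambda>h. Re (c1 * h + c2 * cnj h))"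

lemma norm_Re_linear_le: "norm (Re (c1 * h + c2 * cnj h)) \<le> (cmod c1 + cmod c2) * norm h"
proof -
  have "norm (Re (c1 * h + c2 * cnj h)) \<le> cmod (c1 * h + c2 * cnj h)"
    by (metis abs_Re_le_cmod real_norm_def)
  also have "\<dots> \<le> cmod (c1 * h) + cmod (c2 * cnj h)" by (rule norm_triangle_ineq)
  also have "\<dots> = (cmod c1 + cmod c2) * norm h" by (simp add: norm_mult algebra_simps)
  finally show ?thesis .
qed

lemma re_blinfun_apply: "blinfun_apply (re_blinfun c1 c2) h = Re (c1 * h + c2 * cnj h)"
proof -
  have "bounded_linear (\<lambda>h. Re (c1 * h + c2 * cnj h))"
  proof (rule bounded_linear_intro[where K = "cmod c1 + cmod c2"])
    show "norm (Re (c1 * x + c2 * cnj x)) \<le> norm x * (cmod c1 + cmod c2)" for x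
      using norm_Re_linear_le[of c1 x c2] by (simp only: mult.commute)
  qed (simp_all add: algebra_simps scaleR_conv_of_real)
  then show ?thesis unfolding re_blinfun_def by (simp add: bounded_linear_Blinfun_apply)
qed

lemma continuous_on_re_blinfun:
  assumes "continuous_on S c1" "continuous_on S c2"
  shows "continuous_on S (\<lambda>x. re_blinfun (c1 x) (c2 x))"
  unfolding continuous_on_def
proof (intro ballI)
  fix x assume x: "x \<in> S"
  have t1: "(c1 \<longlongrightarrow> c1 x) (at x within S)" and t2: "(c2 \<longlongrightarrow> c2 x) (at x within S)"
    using assms x unfolding continuous_on_def by auto
  have lim: "((\<lambda>y. cmod (c1 y - c1 x) + cmod (c2 y - c2 x)) \<longlongrightarrow> 0) (at x within S)"
    using tendsto_add[OF tendsto_norm_zero[OF LIM_zero[OF t1]] tendsto_norm_zero[OF LIM_zero[OF t2]]]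
    by simp
  have bound: "norm (re_blinfun (c1 y) (c2 y) - re_blinfun (c1 x) (c2 x))
                 \<le> cmod (c1 y - c1 x) + cmod (c2 y - c2 x)" for y
  proof (rule norm_blinfun_bound)
    fix h
    have "blinfun_apply (re_blinfun (c1 y) (c2 y) - re_blinfun (c1 x) (c2 x)) h
            = Re ((c1 y - c1 x) * h + (c2 y - c2 x) * cnj h)"
      by (simp add: blinfun.diff_left re_blinfun_apply algebra_simps)
    then show "norm (blinfun_apply (re_blinfun (c1 y) (c2 y) - re_blinfun (c1 x) (c2 x)) h)
                 \<le> (cmod (c1 y - c1 x) + cmod (c2 y - c2 x)) * norm h"
      using norm_Re_linear_le by metis
  qed simp
  have "((\<lambda>y. re_blinfun (c1 y) (c2 y) - re_blinfun (c1 x) (c2 x)) \<longlongrightarrow> 0) (at x within S)"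
    by (rule Lim_null_comparison[OF always_eventually lim]) (use bound in blast)
  then show "((\<lambda>x. re_blinfun (c1 x) (c2 x)) \<longlongrightarrow> re_blinfun (c1 x) (c2 x)) (at x within S)"
    by (rule LIM_zero_cancel)
qed

lemma scaleR_mem_convex_0:
  "convex T \<Longrightarrow> 0 \<in> T \<Longrightarrow> x \<in> T \<Longrightarrow> 0 \<le> t \<Longrightarrow> t \<le> 1 \<Longrightarrow> t *\<^sub>R x \<in> T"
  using convexD[of T x 0 t "1 - t"] by simp

lemma radial_primitive_has_derivative:
  assumes T: "convex T" "open T" "0 \<in> T" and g: "wirtinger_C1_on T g A B" and x0: "x0 \<in> T"
  shows "((\<lambda>x. integral {0..1} (\<lambda>t. Re (g (t *\<^sub>R x) * x))) has_derivative
           (\<lambda>h. integral {0..1} (\<lambda>t. Re ((of_real t * A (t *\<^sub>R x0) * x0 + g (t *\<^sub>R x0)) * h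
                                          + of_real t * B (t *\<^sub>R x0) * x0 * cnj h)))) (at x0)"
proof -
  have gd: "\<And>w. w \<in> T \<Longrightarrow> (g has_derivative (\<lambda>h. A w * h + B w * cnj h)) (at w)"
    and cA: "continuous_on T A" and cB: "continuous_on T B"
    using g unfolding wirtinger_C1_on_def by auto
  have cg: "continuous_on T g" using g by (rule wirtinger_C1_on_imp_continuous_on)
  define fx where
    "fx x t = re_blinfun (of_real t * A (t *\<^sub>R x) * x + g (t *\<^sub>R x)) (of_real t * B (t *\<^sub>R x) * x)"
    for x and t :: real
  have radial: "continuous_on (T \<times> cbox 0 1) (\<lambda>p. f (snd p *\<^sub>R fst p))" if "continuous_on T f" for f
    by (rule continuous_on_compose2[OF that]) (auto intro!: continuous_intros scaleR_mem_convex_0[OF T(1,3)])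
  have cfx: "continuous_on (T \<times> cbox 0 1) (\<lambda>(x, t). fx x t)"
    unfolding fx_def split_beta by (intro continuous_on_re_blinfun continuous_intros radial cA cB cg)
  have "((\<lambda>x. integral (cbox 0 1) (\<lambda>t. Re (g (t *\<^sub>R x) * x))) has_derivative integral (cbox 0 1) (fx x0))
          (at x0 within T)"
  proof (rule leibniz_rule[where fx = fx])
    fix x and t :: real assume x: "x \<in> T" and t: "t \<in> cbox 0 1"
    have "((\<lambda>x. g (t *\<^sub>R x)) has_derivative (\<lambda>h. A (t *\<^sub>R x) * (t *\<^sub>R h) + B (t *\<^sub>R x) * cnj (t *\<^sub>R h)))
            (at x within T)"
      using t by (intro has_derivative_compose[OF _ gd] derivative_eq_intros scaleR_mem_convex_0[OF T(1,3) x]) auto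
    then show "((\<lambda>x. Re (g (t *\<^sub>R x) * x)) has_derivative blinfun_apply (fx x t)) (at x within T)"
      by (auto intro!: derivative_eq_intros simp: fx_def re_blinfun_apply scaleR_conv_of_real algebra_simps)
  next
    fix x assume x: "x \<in> T"
    have "continuous_on (cbox 0 1) (\<lambda>t::real. g (t *\<^sub>R x))"
      by (rule continuous_on_compose2[OF cg]) (auto intro!: continuous_intros scaleR_mem_convex_0[OF T(1,3) x])
    then show "(\<lambda>t. Re (g (t *\<^sub>R x) * x)) integrable_on cbox 0 1"
      by (intro integrable_continuous continuous_intros)
  qed (use cfx x0 T in auto)
  moreover have "continuous_on (cbox 0 1) (fx x0)"
    by (rule continuous_on_compose2[OF cfx, of _ "\<lambda>t. (x0, t)", simplified]) (auto intro!: continuous_intros x0)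
  then have "blinfun_apply (integral (cbox 0 1) (fx x0))
               = (\<lambda>h. integral (cbox 0 1) (\<lambda>t. blinfun_apply (fx x0 t) h))"
    by (intro ext blinfun_apply_integral integrable_continuous)
  ultimately show ?thesis
    using at_within_open[OF x0 T(2)] by (simp add: fx_def re_blinfun_apply cbox_interval)
qed

text \<open>This is where closedness enters: for real \<open>B\<close>, \<open>Re (B x cnj h) = Re (B cnj x h)\<close>, so the
  integrand is the \<open>t\<close>-derivative of \<open>t Re (g (t x) h)\<close>.\<close>
lemma radial_integral_eq:
  assumes T: "convex T" "0 \<in> T" and g: "wirtinger_C1_on T g A B"
    and B: "\<And>w. w \<in> T \<Longrightarrow> Im (B w) = 0" and x0: "x0 \<in> T"
  shows "integral {0..1} (\<lambda>t. Re ((of_real t * A (t *\<^sub>R x0) * x0 + g (t *\<^sub>R x0)) * h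
                                 + of_real t * B (t *\<^sub>R x0) * x0 * cnj h)) = Re (g x0 * h)"
proof -
  define \<phi> where "\<phi> t = t * Re (g (t *\<^sub>R x0) * h)" for t :: real
  have "(\<phi> has_vector_derivative Re ((of_real t * A (t *\<^sub>R x0) * x0 + g (t *\<^sub>R x0)) * h
          + of_real t * B (t *\<^sub>R x0) * x0 * cnj h)) (at t within {0..1})"
    if "t \<in> {0..1}" for t
  proof -
    have tx0: "t *\<^sub>R x0 \<in> T" using that by (auto intro: scaleR_mem_convex_0[OF T x0])
    then have gd: "(g has_derivative (\<lambda>h. A (t *\<^sub>R x0) * h + B (t *\<^sub>R x0) * cnj h)) (at (t *\<^sub>R x0))"
      using g unfolding wirtinger_C1_on_def by blast
    have B0: "Im (B (x0 * of_real t)) = 0"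
      using B[OF tx0] by (simp add: scaleR_conv_of_real mult.commute)
    have "((\<lambda>t. t *\<^sub>R x0) has_derivative (\<lambda>s. s *\<^sub>R x0)) (at t within {0..1})"
      by (intro derivative_eq_intros) auto
    from has_derivative_compose[OF this gd] show ?thesis
      unfolding \<phi>_def has_vector_derivative_def
      by (auto intro!: derivative_eq_intros elim!: has_derivative_eq_rhs
          simp: B0 scaleR_conv_of_real algebra_simps)
  qed
  then have "((\<lambda>t. Re ((of_real t * A (t *\<^sub>R x0) * x0 + g (t *\<^sub>R x0)) * h
                 + of_real t * B (t *\<^sub>R x0) * x0 * cnj h)) has_integral \<phi> 1 - \<phi> 0) {0..1}"
    by (intro fundamental_theorem_of_calculus) auto
  then show ?thesis by (simp add: integral_unique \<phi>_def)
qed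

lemma real_primitive_on_convex:
  assumes "convex T" "open T" "0 \<in> T" "wirtinger_C1_on T g A B" "\<And>w. w \<in> T \<Longrightarrow> Im (B w) = 0"
  shows "\<exists>F. real_primitive_on T F g"
  using radial_primitive_has_derivative[OF assms(1-4)] radial_integral_eq[OF assms(1,3-5)]
  unfolding real_primitive_on_def by (intro exI) auto

lemma wirtinger_C1_on_pullback:
  assumes g: "wirtinger_C1_on S g A B" and T: "open T" "k holomorphic_on T" "k ` T \<subseteq> S"
  shows "wirtinger_C1_on T (\<lambda>w. g (k w) * deriv k w)
           (\<lambda>w. A (k w) * (deriv k w)\<^sup>2 + g (k w) * deriv (deriv k) w)
           (\<lambda>w. B (k w) * (deriv k w * cnj (deriv k w)))"
  unfolding wirtinger_C1_on_def
proof (intro conjI ballI)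
  fix w assume w: "w \<in> T"
  have "(k has_derivative (*) (deriv k w)) (at w)"
    "(deriv k has_derivative (*) (deriv (deriv k) w)) (at w)"
    using holomorphic_derivI[OF T(2,1) w] holomorphic_derivI[OF holomorphic_deriv[OF T(2,1)] T(1) w]
    by (simp_all add: has_field_derivative_def)
  moreover have "(g has_derivative (\<lambda>h. A (k w) * h + B (k w) * cnj h)) (at (k w))"
    using g T(3) w unfolding wirtinger_C1_on_def by blast
  ultimately show "((\<lambda>w. g (k w) * deriv k w) has_derivative
      (\<lambda>h. (A (k w) * (deriv k w)\<^sup>2 + g (k w) * deriv (deriv k) w) * h
           + B (k w) * (deriv k w * cnj (deriv k w)) * cnj h)) (at w)"
    by (auto intro!: derivative_eq_intros has_derivative_compose[of k _ _ _ g]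
        elim!: has_derivative_eq_rhs simp: algebra_simps power2_eq_square)
next
  have k: "continuous_on T k" "continuous_on T (deriv k)" "continuous_on T (deriv (deriv k))"
    using T(1,2) by (auto intro!: holomorphic_on_imp_continuous_on holomorphic_deriv)
  have comp: "continuous_on T (\<lambda>w. f (k w))" if "continuous_on S f" for f
    using continuous_on_compose2[OF that k(1) T(3)] .
  show "continuous_on T (\<lambda>w. A (k w) * (deriv k w)\<^sup>2 + g (k w) * deriv (deriv k) w)"
    "continuous_on T (\<lambda>w. B (k w) * (deriv k w * cnj (deriv k w)))"
    using g wirtinger_C1_on_imp_continuous_on[OF g] unfolding wirtinger_C1_on_def
    by (auto intro!: continuous_intros comp k)
qed

lemma real_primitive_on_compose_holomorphic:
  assumes F: "real_primitive_on T F (\<lambda>w. g (k w) * deriv k w)"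
    and S: "open S" "f holomorphic_on S" "f ` S \<subseteq> T" "\<And>z. z \<in> S \<Longrightarrow> k (f z) = z"
    and T: "open T" "k holomorphic_on T"
  shows "real_primitive_on S (\<lambda>z. F (f z)) g"
  unfolding real_primitive_on_def
proof
  fix z assume z: "z \<in> S"
  have fz: "f z \<in> T" using S(3) z by blast
  have df: "(f has_field_derivative deriv f z) (at z)" using holomorphic_derivI[OF S(2,1) z] .
  have "((\<lambda>z. k (f z)) has_field_derivative deriv k (f z) * deriv f z) (at z)"
    using DERIV_chain2[OF holomorphic_derivI[OF T(2,1) fz] df] .
  then have "((\<lambda>z. z) has_field_derivative deriv k (f z) * deriv f z) (at z)"
    by (rule has_field_derivative_transform_within_open[OF _ S(1) z]) (use S(4) in auto)
  then have inverse: "deriv k (f z) * deriv f z = 1"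
    using DERIV_ident DERIV_unique by blast
  have "((\<lambda>z. F (f z)) has_derivative (\<lambda>h. Re (g (k (f z)) * deriv k (f z) * (deriv f z * h)))) (at z)"
    using has_derivative_compose[OF df[unfolded has_field_derivative_def]] F fz
    unfolding real_primitive_on_def by blast
  then show "((\<lambda>z. F (f z)) has_derivative (\<lambda>h. Re (g z * h))) (at z)"
    using inverse by (simp add: S(4)[OF z] mult.assoc flip: mult.assoc[of "deriv k (f z)"])
qed

text \<open>The form is pulled back to the disc along the inverse Riemann map.\<close>
lemma real_primitive_on_simply_connected:
  assumes S: "open S" "simply_connected S"
    and g: "wirtinger_C1_on S g A B" and B: "\<And>w. w \<in> S \<Longrightarrow> Im (B w) = 0"
  shows "\<exists>F. real_primitive_on S F g"
proof -
  consider "S = {}" | "S = UNIV" | f k where "f holomorphic_on S" "k holomorphic_on ball 0 1"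
      "\<forall>z \<in> S. f z \<in> ball 0 1 \<and> k (f z) = z" "\<forall>z \<in> ball 0 1. k z \<in> S \<and> f (k z) = z"
    using simply_connected_eq_biholomorphic_to_disc[OF S(1)] S(2) by blast
  then show ?thesis
  proof cases
    case 1
    then show ?thesis by (auto simp: real_primitive_on_def)
  next
    case 2
    then show ?thesis using real_primitive_on_convex[of UNIV g A B] g B by auto
  next
    case (3 f k)
    have kS: "k ` ball 0 1 \<subseteq> S" using 3(4) by blast
    obtain F where "real_primitive_on (ball 0 1) F (\<lambda>w. g (k w) * deriv k w)"
      using real_primitive_on_convex[OF _ _ _ wirtinger_C1_on_pullback[OF g _ 3(2) kS]] B kS
      by fastforce
    then have "real_primitive_on S (\<lambda>z. F (f z)) g"
      by (rule real_primitive_on_compose_holomorphic) (use S 3 in auto)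
    then show ?thesis by blast
  qed
qed

section \<open>The Weierstrass representation\<close>

lemma wvec_component_real_primitive:
  assumes "open \<Omega>" "simply_connected \<Omega>" "h holomorphic_on \<Omega>"
    and m: "wirtinger_C1_on \<Omega> m Am Bm" and n: "wirtinger_C1_on \<Omega> n An Bn"
    and B: "\<And>w. w \<in> \<Omega> \<Longrightarrow> Im (Bn w) = 0 \<and> Bm w = of_real (Re (h w)) * Bn w"
  shows "\<exists>F A. real_primitive_on \<Omega> F (\<lambda>w. wvec (m w) (n w) (h w) $ j) \<and>
           wirtinger_C1_on \<Omega> (\<lambda>w. wvec (m w) (n w) (h w) $ j) A (\<lambda>w. wvec (Bm w) (Bn w) (h w) $ j)"
proof -
  have linear: "(\<lambda>w. wvec (p w) (q w) (h w) $ j)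
                  = (\<lambda>w. wvec 1 0 (h w) $ j * p w + wvec 0 1 (h w) $ j * q w)" for p q
    by (rule ext, subst wvec_nth_linear) (simp add: mult.commute)
  obtain A where C1: "wirtinger_C1_on \<Omega> (\<lambda>w. wvec (m w) (n w) (h w) $ j) A (\<lambda>w. wvec (Bm w) (Bn w) (h w) $ j)"
    unfolding linear
    using wirtinger_C1_on_holomorphic_comb[OF assms(1) holomorphic_on_wvec_nth holomorphic_on_wvec_nth m n, OF assms(3,3)]
    by blast
  have "Im (wvec (Bm w) (Bn w) (h w) $ j) = 0" if "w \<in> \<Omega>" for w
  proof -
    have "wvec (Bm w) (Bn w) (h w) = (\<chi> j. Bn w * wvec (of_real (Re (h w))) 1 (h w) $ j)"
      using B[OF that] by (simp add: wvec_scale mult.commute)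
    then show ?thesis using B[OF that] Im_wvec_Re by simp
  qed
  then obtain F where "real_primitive_on \<Omega> F (\<lambda>w. wvec (m w) (n w) (h w) $ j)"
    using real_primitive_on_simply_connected[OF assms(1,2) C1] by blast
  with C1 show ?thesis by blast
qed

lemma weierstrass_data_2_wirtinger:
  assumes "open \<Omega>" "weierstrass_data_2 \<Omega> h M N"
  obtains m Am Bm n An Bn where
    "real_primitive_on \<Omega> M m" "wirtinger_C1_on \<Omega> m Am Bm" "\<And>w. w \<in> \<Omega> \<Longrightarrow> m w = 2 * rdz M w"
    "real_primitive_on \<Omega> N n" "wirtinger_C1_on \<Omega> n An Bn" "\<And>w. w \<in> \<Omega> \<Longrightarrow> n w = 2 * rdz N w"
    "\<And>w. w \<in> \<Omega> \<Longrightarrow> Im (Bn w) = 0 \<and> Bm w = of_real (Re (h w)) * Bn w"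
proof -
  have C2: "C2_on \<Omega> M" "C2_on \<Omega> N"
    and wz: "\<And>z. z \<in> \<Omega> \<Longrightarrow> dzbar (rdz M) z = of_real (Re (h z)) * dzbar (rdz N) z"
    using assms(2) unfolding weierstrass_data_2_def by auto
  obtain m Am Bm where M: "real_primitive_on \<Omega> M m" "wirtinger_C1_on \<Omega> m Am Bm"
    and m: "\<And>w. w \<in> \<Omega> \<Longrightarrow> m w = 2 * rdz M w"
    using C2_on_imp_real_primitive_on[OF assms(1) C2(1)] by blast
  obtain n An Bn where N: "real_primitive_on \<Omega> N n" "wirtinger_C1_on \<Omega> n An Bn"
    and n: "\<And>w. w \<in> \<Omega> \<Longrightarrow> n w = 2 * rdz N w"
    using C2_on_imp_real_primitive_on[OF assms(1) C2(2)] by blast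
  have "Im (Bn w) = 0 \<and> Bm w = of_real (Re (h w)) * Bn w" if w: "w \<in> \<Omega>" for w
  proof
    show "Im (Bn w) = 0" using real_primitive_on_dzbar_real[OF assms(1) N w] .
    have "dzbar (rdz M) w = 1/2 * Bm w"
      by (rule dzbar_eq_on_open[OF assms(1) w, of m "Am w"]) (use M(2) w m in \<open>auto simp: wirtinger_C1_on_def\<close>)
    moreover have "dzbar (rdz N) w = 1/2 * Bn w"
      by (rule dzbar_eq_on_open[OF assms(1) w, of n "An w"]) (use N(2) w n in \<open>auto simp: wirtinger_C1_on_def\<close>)
    ultimately show "Bm w = of_real (Re (h w)) * Bn w" using wz[OF w] by simp
  qed
  with M m N n show ?thesis by (rule that)
qed

lemma weierstrass_map_exists:
  assumes "open \<Omega>" "simply_connected \<Omega>" "weierstrass_data_2 \<Omega> h M N"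
  obtains X :: "complex \<Rightarrow> real^4" where "\<And>j. C2_on \<Omega> (\<lambda>w. X w $ j)"
    "\<And>z. z \<in> \<Omega> \<Longrightarrow> Xz X z = XzW h M N z"
    "\<And>z. z \<in> \<Omega> \<Longrightarrow> \<exists>p q. Xzzbar X z = wvec p q (h z)"
proof -
  obtain m Am Bm n An Bn where m: "wirtinger_C1_on \<Omega> m Am Bm" "\<And>w. w \<in> \<Omega> \<Longrightarrow> m w = 2 * rdz M w"
    and n: "wirtinger_C1_on \<Omega> n An Bn" "\<And>w. w \<in> \<Omega> \<Longrightarrow> n w = 2 * rdz N w"
    and B: "\<And>w. w \<in> \<Omega> \<Longrightarrow> Im (Bn w) = 0 \<and> Bm w = of_real (Re (h w)) * Bn w"
    using weierstrass_data_2_wirtinger[OF assms(1,3)] by metis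
  have hol: "h holomorphic_on \<Omega>" using assms(3) unfolding weierstrass_data_2_def by blast
  define g where "g j w = wvec (m w) (n w) (h w) $ j" for j w
  obtain F A where F: "\<And>j. real_primitive_on \<Omega> (F j) (g j)"
    and A: "\<And>j. wirtinger_C1_on \<Omega> (g j) (A j) (\<lambda>w. wvec (Bm w) (Bn w) (h w) $ j)"
    using wvec_component_real_primitive[OF assms(1,2) hol m(1) n(1) B, unfolded g_def[symmetric]] by metis
  define X where "X w = (\<chi> j. F j w)" for w
  have Xj: "(\<lambda>w. X w $ j) = F j" for j by (simp add: X_def)
  have Xz: "Xz X w $ j = 1/2 * g j w" if "w \<in> \<Omega>" for w j
    using rdz_eq_half F[of j] that unfolding Xz_def Xj real_primitive_on_def by simp
  show ?thesis
  proof
    show "C2_on \<Omega> (\<lambda>w. X w $ j)" for j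
      unfolding Xj using C2_on_if_real_primitive_on[OF assms(1) F A] .
    show "Xz X z = XzW h M N z" if "z \<in> \<Omega>" for z
      using Xz[OF that] m(2)[OF that] n(2)[OF that]
      by (simp add: XzW_eq_wvec vec_eq_iff g_def flip: wvec_scale)
    show "\<exists>p q. Xzzbar X z = wvec p q (h z)" if "z \<in> \<Omega>" for z
    proof (intro exI)
      have d: "dzbar (\<lambda>w. Xz X w $ j) z = 1/2 * wvec (Bm z) (Bn z) (h z) $ j" for j
        by (rule dzbar_eq_on_open[OF assms(1) that, of "g j" "A j z"])
           (use A[of j] that in \<open>auto simp: wirtinger_C1_on_def Xz\<close>)
      show "Xzzbar X z = wvec (1/2 * Bm z) (1/2 * Bn z) (h z)"
        unfolding Xzzbar_def d by (rule wvec_scale)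
    qed
  qed
qed

lemma differentiable_vec_nth:
  fixes Y :: "'a::real_normed_vector \<Rightarrow> 'b::real_normed_vector ^ 'n"
  shows "Y differentiable (at z) \<Longrightarrow> (\<lambda>w. Y w $ j) differentiable (at z)"
  unfolding differentiable_def using bounded_linear.has_derivative[OF bounded_linear_vec_nth] by blast

lemma Xz_eq_imp_eq_plus_const:
  fixes X Y :: "complex \<Rightarrow> real^4"
  assumes "open S" "connected S"
    and "\<And>j z. z \<in> S \<Longrightarrow> (\<lambda>w. X w $ j) differentiable (at z)"
    and "\<And>j z. z \<in> S \<Longrightarrow> (\<lambda>w. Y w $ j) differentiable (at z)"
    and "\<And>z. z \<in> S \<Longrightarrow> Xz Y z = Xz X z"
  shows "\<exists>c. \<forall>z\<in>S. Y z = X z + c"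
proof -
  have "\<exists>c. \<forall>z\<in>S. Y z $ j = X z $ j + c" for j
    using assms by (intro rdz_eq_imp_eq_plus_const) (auto simp: Xz_def vec_eq_iff)
  then obtain c where "\<And>j. \<forall>z\<in>S. Y z $ j = X z $ j + c j" by metis
  then show ?thesis by (intro exI[of _ "\<chi> j. c j"]) (simp add: vec_eq_iff)
qed

lemma confLambda_eq_wvec:
  "Xz X z = wvec p q k \<Longrightarrow> confLambda X z = 4 * (cmod (p - of_real (Re k) * q))\<^sup>2"
  unfolding confLambda_def by (simp add: lor_wvec_cvec)

lemma conformal_spacelike_immersion_wvecI:
  fixes X :: "complex \<Rightarrow> real^4"
  assumes "\<And>j. C2_on S (\<lambda>w. X w $ j)"
    and "\<And>z. z \<in> S \<Longrightarrow> Xz X z = wvec (p z) (q z) (k z)"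
    and "\<And>z. z \<in> S \<Longrightarrow> p z - of_real (Re (k z)) * q z \<noteq> 0"
  shows "conformal_spacelike_immersion S X"
  using assms by (simp add: conformal_spacelike_immersion_def confLambda_eq_wvec lor_wvec_self lor_wvec_cvec)

lemma marginally_trapped_wvecI:
  assumes "\<And>z. z \<in> S \<Longrightarrow> \<exists>p q k. Xzzbar X z = wvec p q k"
  shows "marginally_trapped S X"
  unfolding marginally_trapped_def meanH_def
  by (metis assms wvec_scale lor_wvec_self)

theorem mainTheorem6:
  fixes \<Omega> :: "complex set" and h :: "complex \<Rightarrow> complex" and M N :: "complex \<Rightarrow> real"
  assumes "open \<Omega>" and "connected \<Omega>" and "simply_connected \<Omega>"
    and "weierstrass_data_2 \<Omega> h M N"
  shows "\<exists>X :: complex \<Rightarrow> real^4.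
           (\<forall>z\<in>\<Omega>. Xz X z = XzW h M N z) \<and>
           (\<forall>Y :: complex \<Rightarrow> real^4.
               (\<forall>z\<in>\<Omega>. Y differentiable (at z)) \<and> (\<forall>z\<in>\<Omega>. Xz Y z = XzW h M N z)
               \<longrightarrow> (\<exists>c. \<forall>z\<in>\<Omega>. Y z = X z + c)) \<and>
           conformal_spacelike_immersion \<Omega> X \<and>
           marginally_trapped \<Omega> X \<and>
           (\<forall>z\<in>\<Omega>. confLambda X z = 4 * (cmod (rdz M z - complex_of_real (Re (h z)) * rdz N z))\<^sup>2) \<and>
           (\<exists>c. \<forall>z\<in>\<Omega>. X z $ 1 = M z + c) \<and>
           (\<exists>c. \<forall>z\<in>\<Omega>. X z $ 3 + X z $ 4 = N z + c)"
proof -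
  obtain X :: "complex \<Rightarrow> real^4" where C2: "\<And>j. C2_on \<Omega> (\<lambda>w. X w $ j)"
    and XzX: "\<And>z. z \<in> \<Omega> \<Longrightarrow> Xz X z = XzW h M N z"
    and Xzzbar: "\<And>z. z \<in> \<Omega> \<Longrightarrow> \<exists>p q. Xzzbar X z = wvec p q (h z)"
    using weierstrass_map_exists[OF assms(1,3,4)] by blast
  have XzX': "Xz X z = wvec (rdz M z) (rdz N z) (h z)" if "z \<in> \<Omega>" for z
    using XzX[OF that] by (simp add: XzW_eq_wvec)
  have dX: "\<And>j z. z \<in> \<Omega> \<Longrightarrow> (\<lambda>w. X w $ j) differentiable (at z)"
    and dMN: "\<And>z. z \<in> \<Omega> \<Longrightarrow> M differentiable (at z) \<and> N differentiable (at z)"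
    and nz: "\<And>z. z \<in> \<Omega> \<Longrightarrow> rdz M z - of_real (Re (h z)) * rdz N z \<noteq> 0"
    using C2 assms(4) unfolding weierstrass_data_2_def C2_on_def by auto
  show ?thesis
  proof (intro exI[of _ X] conjI ballI allI impI)
    show "\<exists>c. \<forall>z\<in>\<Omega>. Y z = X z + c"
      if "(\<forall>z\<in>\<Omega>. Y differentiable (at z)) \<and> (\<forall>z\<in>\<Omega>. Xz Y z = XzW h M N z)" for Y
      using that XzX by (intro Xz_eq_imp_eq_plus_const[OF assms(1,2) dX differentiable_vec_nth]) auto
    show "conformal_spacelike_immersion \<Omega> X"
      using conformal_spacelike_immersion_wvecI[OF C2 XzX' nz] .
    show "marginally_trapped \<Omega> X"
      by (rule marginally_trapped_wvecI) (use Xzzbar in blast)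
    show "\<exists>c. \<forall>z\<in>\<Omega>. X z $ 1 = M z + c"
      using XzX' dX dMN by (intro rdz_eq_imp_eq_plus_const[OF assms(1,2)]) (auto simp: Xz_def vec_eq_iff wvec_def)
    show "\<exists>c. \<forall>z\<in>\<Omega>. X z $ 3 + X z $ 4 = N z + c"
      using XzX' dX dMN
      by (intro rdz_eq_imp_eq_plus_const[OF assms(1,2)])
         (auto simp: rdz_add differentiable_add Xz_def vec_eq_iff wvec_def field_simps)
  qed (use XzX XzX' confLambda_eq_wvec in auto)
qed

end
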